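(* Let $\mathbf{k}$ be a commutative ring, $n\ge 0$, and $\mathcal{A}=\mathbf{k}[S_n]$. If $\alpha,\beta\in\operatorname{Comp}_n$ are anagrams (that is, $\widetilde{\alpha}=\widetilde{\beta}$), then $\mathcal{R}_\alpha=\mathcal{R}_\beta$.
   Context: $S_n$ is the symmetric group on $[n]=\{1,\dots,n\}$, with product $(uw)(i)=u(w(i))$. For $w\in S_n$, $\operatorname{Des}(w)=\{i\in[n-1]: w(i)>w(i+1)\}$. For $I\subseteq[n-1]$, $\mathbf{B}_I=\sum_{w\in S_n,\ \operatorname{Des}(w)\subseteq I} w\in\mathcal{A}$. A composition $\alpha=(\alpha_1,\dots,\alpha_p)$ of $n$ is a finite sequence of positive integers with sum $n$; $\operatorname{Comp}_n$ is the set of these. $\operatorname{Set}(\alpha)=\{\alpha_1,\alpha_1+\alpha_2,\dots,\alpha_1+\cdots+\alpha_{p-1}\}\subseteq[n-1]$, and $\mathbf{B}_\alpha:=\mathbf{B}_{\operatorname{Set}(\alpha)}$. The underlying partition $\widetilde{\alpha}$ is obtained by sorting the parts of $\alpha$ in weakly decreasing order; $\alpha,\beta$ are anagrams if $\widetilde\alpha=\widetilde\beta$. For $\beta\in\operatorname{Comp}_n$, $\mathcal{R}_\beta:=\mathbf{B}_\beta\mathcal{A}$ (a right ideal of $\mathcal{A}$). *)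

theory Defs
  imports "HOL-Combinatorics.Permutations"
begin

definition Sym :: "nat \<Rightarrow> (nat \<Rightarrow> nat) set" where
  "Sym n = {p. p permutes {1..n}}"

definition grp_alg :: "nat \<Rightarrow> ((nat \<Rightarrow> nat) \<Rightarrow> 'k::comm_ring_1) set" where
  "grp_alg n = {f. \<forall>p. p \<notin> Sym n \<longrightarrow> f p = 0}"

text \<open>Multiplication in k[S_n], with (u w)(i) = u (w i), i.e. u w = u \<circ> w.\<close>
definition alg_mult :: "nat \<Rightarrow> ((nat \<Rightarrow> nat) \<Rightarrow> 'k::comm_ring_1) \<Rightarrow> ((nat \<Rightarrow> nat) \<Rightarrow> 'k) \<Rightarrow> ((nat \<Rightarrow> nat) \<Rightarrow> 'k)" where
  "alg_mult n a b = (\<lambda>w. \<Sum>(u, v) \<in> {(u, v). u \<in> Sym n \<and> v \<in> Sym n \<and> u \<circ> v = w}. a u * b v)"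

definition Des :: "nat \<Rightarrow> (nat \<Rightarrow> nat) \<Rightarrow> nat set" where
  "Des n w = {i \<in> {1..<n}. w i > w (i + 1)}"

definition BI :: "nat \<Rightarrow> nat set \<Rightarrow> ((nat \<Rightarrow> nat) \<Rightarrow> 'k::comm_ring_1)" where
  "BI n I = (\<lambda>w. if w \<in> Sym n \<and> Des n w \<subseteq> I then 1 else 0)"

definition Comp :: "nat \<Rightarrow> nat list set" where
  "Comp n = {\<alpha>. (\<forall>a \<in> set \<alpha>. 0 < a) \<and> sum_list \<alpha> = n}"

definition SetC :: "nat list \<Rightarrow> nat set" where
  "SetC \<alpha> = {sum_list (take j \<alpha>) | j. 1 \<le> j \<and> j < length \<alpha>}"

definition underlying_partition :: "nat list \<Rightarrow> nat list" where
  "underlying_partition \<alpha> = rev (sort \<alpha>)"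

definition B_comp :: "nat \<Rightarrow> nat list \<Rightarrow> ((nat \<Rightarrow> nat) \<Rightarrow> 'k::comm_ring_1)" where
  "B_comp n \<alpha> = BI n (SetC \<alpha>)"

definition R_ideal :: "nat \<Rightarrow> nat list \<Rightarrow> ((nat \<Rightarrow> nat) \<Rightarrow> 'k::comm_ring_1) set" where
  "R_ideal n \<beta> = {alg_mult n (B_comp n \<beta>) x | x. x \<in> grp_alg n}"

end

theory Submission
  imports Defs
begin

text \<open>
  If a permutation \<open>s\<close> satisfies \<open>Des(w) \<subseteq> Set(\<alpha>) \<longleftrightarrow> Des(w s) \<subseteq> Set(\<beta>)\<close> for all \<open>w\<close>,
  then \<open>B\<^sub>\<alpha> = B\<^sub>\<beta> s\<^sup>-\<^sup>1\<close>, and since \<open>s\<^sup>-\<^sup>1\<close> is a unit of \<open>\<A>\<close> the right ideals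
  \<open>B\<^sub>\<alpha> \<A>\<close> and \<open>B\<^sub>\<beta> \<A>\<close> coincide. When \<open>\<beta>\<close> arises from \<open>\<alpha>\<close> by exchanging two adjacent
  parts, the permutation of \<open>[n]\<close> exchanging the two corresponding adjacent intervals (keeping
  the order inside each) is such an \<open>s\<close>: it maps every interval of \<open>\<beta>\<close> increasingly onto an
  interval of \<open>\<alpha>\<close>. Anagrams are connected by a chain of adjacent exchanges.
\<close>

lemma comp_in_Sym_iff:
  assumes "s \<in> Sym n"
  shows "u \<circ> s \<in> Sym n \<longleftrightarrow> u \<in> Sym n" and "s \<circ> u \<in> Sym n \<longleftrightarrow> u \<in> Sym n"
proof -
  have s: "s permutes {1..n}" and s': "inv s permutes {1..n}"
    using assms permutes_inv unfolding Sym_def by auto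
  have "u \<circ> s \<circ> inv s = u" "inv s \<circ> (s \<circ> u) = u"
    using permutes_inv_o[OF s] by (simp_all add: fun_eq_iff)
  then show "u \<circ> s \<in> Sym n \<longleftrightarrow> u \<in> Sym n" and "s \<circ> u \<in> Sym n \<longleftrightarrow> u \<in> Sym n"
    using permutes_compose[OF s] permutes_compose[OF _ s] permutes_compose[OF s']
      permutes_compose[OF _ s'] unfolding Sym_def by (metis mem_Collect_eq)+
qed

definition principal_right_ideal ::
    "nat \<Rightarrow> ((nat \<Rightarrow> nat) \<Rightarrow> 'k::comm_ring_1) \<Rightarrow> ((nat \<Rightarrow> nat) \<Rightarrow> 'k) set" where
  "principal_right_ideal n b = {alg_mult n b x | x. x \<in> grp_alg n}"

lemma R_ideal_eq_principal_right_ideal: "R_ideal n \<beta> = principal_right_ideal n (B_comp n \<beta>)"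
  unfolding R_ideal_def principal_right_ideal_def ..

lemma grp_alg_left_translate:
  assumes "s \<in> Sym n" "x \<in> grp_alg n"
  shows "(\<lambda>v. x (s \<circ> v)) \<in> grp_alg n"
  using assms comp_in_Sym_iff(2)[of s n] unfolding grp_alg_def by auto

lemma alg_mult_right_translate:
  assumes "s \<in> Sym n"
  shows "alg_mult n (\<lambda>u. b (u \<circ> s)) x = alg_mult n b (\<lambda>v. x (s \<circ> v))"
proof
  fix w
  let ?P = "{(u, v). u \<in> Sym n \<and> v \<in> Sym n \<and> u \<circ> v = w}"
  have inv_s: "inv s \<in> Sym n" "s \<circ> inv s = id" "inv s \<circ> s = id"
    using assms permutes_inv permutes_inv_o unfolding Sym_def by auto
  have "(\<Sum>(u, v)\<in>?P. b (u \<circ> s) * x v) = (\<Sum>(u, v)\<in>?P. b u * x (s \<circ> v))"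
  proof (rule sum.reindex_bij_witness[where j = "\<lambda>(u, v). (u \<circ> s, inv s \<circ> v)"
        and i = "\<lambda>(u, v). (u \<circ> inv s, s \<circ> v)"])
    show "(\<lambda>(u, v). (u \<circ> inv s, s \<circ> v)) ((\<lambda>(u, v). (u \<circ> s, inv s \<circ> v)) c) = c"
      and "(\<lambda>(u, v). (u \<circ> s, inv s \<circ> v)) ((\<lambda>(u, v). (u \<circ> inv s, s \<circ> v)) c) = c"
      and "(case (\<lambda>(u, v). (u \<circ> s, inv s \<circ> v)) c of (u, v) \<Rightarrow> b u * x (s \<circ> v)) =
           (case c of (u, v) \<Rightarrow> b (u \<circ> s) * x v)" for c
      using inv_s by (auto simp: o_assoc[symmetric] split: prod.splits) (simp_all add: o_assoc)
    show "(\<lambda>(u, v). (u \<circ> s, inv s \<circ> v)) c \<in> ?P"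
      and "(\<lambda>(u, v). (u \<circ> inv s, s \<circ> v)) c \<in> ?P" if "c \<in> ?P" for c
      using that assms inv_s comp_in_Sym_iff by (auto simp: o_assoc[symmetric]) (simp_all add: o_assoc)
  qed
  then show "alg_mult n (\<lambda>u. b (u \<circ> s)) x w = alg_mult n b (\<lambda>v. x (s \<circ> v)) w"
    unfolding alg_mult_def by simp
qed

lemma principal_right_ideal_right_translate_subset:
  assumes "s \<in> Sym n"
  shows "principal_right_ideal n (\<lambda>u. b (u \<circ> s)) \<subseteq> principal_right_ideal n b"
  using assms alg_mult_right_translate grp_alg_left_translate
  unfolding principal_right_ideal_def by blast

lemma principal_right_ideal_right_translate:
  assumes "s \<in> Sym n"
  shows "principal_right_ideal n (\<lambda>u. b (u \<circ> s)) = principal_right_ideal n b"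
proof
  have "inv s \<in> Sym n" "inv s \<circ> s = id"
    using assms permutes_inv permutes_inv_o unfolding Sym_def by auto
  then have "principal_right_ideal n (\<lambda>u. b (u \<circ> inv s \<circ> s)) \<subseteq> principal_right_ideal n (\<lambda>u. b (u \<circ> s))"
    using principal_right_ideal_right_translate_subset[of "inv s" n "\<lambda>u. b (u \<circ> s)"]
    by (simp add: o_assoc)
  with \<open>inv s \<circ> s = id\<close> show "principal_right_ideal n b \<subseteq> principal_right_ideal n (\<lambda>u. b (u \<circ> s))"
    by (simp add: o_assoc[symmetric])
qed (rule principal_right_ideal_right_translate_subset[OF assms])

definition transports_descents :: "nat \<Rightarrow> (nat \<Rightarrow> nat) \<Rightarrow> nat set \<Rightarrow> nat set \<Rightarrow> bool" where
  "transports_descents n s I J \<longleftrightarrow> s \<in> Sym n \<and> (\<forall>w. Des n w \<subseteq> I \<longleftrightarrow> Des n (w \<circ> s) \<subseteq> J)"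

lemma transports_descents_id: "transports_descents n id I I"
  unfolding transports_descents_def Sym_def by (simp add: permutes_id)

lemma transports_descents_trans:
  assumes "transports_descents n s I J" "transports_descents n t J K"
  shows "transports_descents n (s \<circ> t) I K"
  using assms unfolding transports_descents_def Sym_def by (simp add: permutes_compose o_assoc)

lemma Des_comp_subset:
  assumes "s \<in> Sym n"
    and "\<And>i. 1 \<le> i \<Longrightarrow> i < n \<Longrightarrow> i \<notin> J \<Longrightarrow> s (i + 1) = s i + 1 \<and> s i \<notin> I"
    and "Des n w \<subseteq> I"
  shows "Des n (w \<circ> s) \<subseteq> J"
proof
  fix i
  assume "i \<in> Des n (w \<circ> s)"
  then have i: "1 \<le> i" "i < n" "w (s (i + 1)) < w (s i)" unfolding Des_def by auto
  show "i \<in> J"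
  proof (rule ccontr)
    assume "i \<notin> J"
    then have shift: "s (i + 1) = s i + 1" and "s i \<notin> I" using assms(2) i by auto
    have "s i \<in> {1..n}" "s (i + 1) \<in> {1..n}"
      using permutes_in_image[of s "{1..n}"] assms(1) i unfolding Sym_def by auto
    then have "s i \<in> Des n w" using shift i unfolding Des_def by auto
    with \<open>s i \<notin> I\<close> assms(3) show False by blast
  qed
qed

lemma BI_transports_descents:
  assumes "transports_descents n s I J"
  shows "BI n I = (\<lambda>u. BI n J (u \<circ> s))"
  using assms comp_in_Sym_iff(1)[of s n] unfolding transports_descents_def BI_def by auto

lemma SetC_Cons:
  assumes "xs \<noteq> []"
  shows "SetC (a # xs) = insert a ((+) a ` SetC xs)"
proof (rule set_eqI)
  fix t
  have "t \<in> SetC (a # xs) \<longleftrightarrow> t = a \<or> (\<exists>j. 1 \<le> j \<and> j < length xs \<and> t = a + sum_list (take j xs))"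
  proof
    assume "t \<in> SetC (a # xs)"
    then obtain j where "1 \<le> j" "j < Suc (length xs)" "t = sum_list (take j (a # xs))"
      unfolding SetC_def by auto
    then obtain k where "j = Suc k" "k < length xs" "t = a + sum_list (take k xs)"
      by (cases j) auto
    then show "t = a \<or> (\<exists>j. 1 \<le> j \<and> j < length xs \<and> t = a + sum_list (take j xs))"
      by (cases k) auto
  next
    assume "t = a \<or> (\<exists>j. 1 \<le> j \<and> j < length xs \<and> t = a + sum_list (take j xs))"
    then show "t \<in> SetC (a # xs)"
    proof
      assume "t = a"
      then show ?thesis unfolding SetC_def using assms by (auto intro!: exI[of _ 1])
    next
      assume "\<exists>j. 1 \<le> j \<and> j < length xs \<and> t = a + sum_list (take j xs)"
      then obtain j where "1 \<le> j" "j < length xs" "t = a + sum_list (take j xs)" by blast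
      then show ?thesis unfolding SetC_def by (auto intro!: exI[of _ "Suc j"])
    qed
  qed
  then show "t \<in> SetC (a # xs) \<longleftrightarrow> t \<in> insert a ((+) a ` SetC xs)"
    unfolding SetC_def by auto
qed

lemma SetC_singleton [simp]: "SetC [a] = {}"
  unfolding SetC_def by auto

lemma SetC_merge_parts:
  "SetC (g1 @ x # y # g2) = insert (sum_list g1 + x) (SetC (g1 @ (x + y) # g2))"
proof (induction g1)
  case Nil
  show ?case
    by (cases g2) (auto simp: SetC_Cons image_image add.assoc)
next
  case (Cons a g1)
  then show ?case
    by (simp add: SetC_Cons insert_commute add.assoc)
qed

lemma SetC_part_gap:
  assumes "t \<in> SetC (g1 @ m # g2)"
  shows "t \<le> sum_list g1 \<or> sum_list g1 + m \<le> t"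
proof -
  obtain j where "t = sum_list (take j (g1 @ m # g2))"
    using assms unfolding SetC_def by blast
  moreover have "sum_list (take j g1) \<le> sum_list g1"
    by (metis append_take_drop_id sum_list_append le_add1)
  ultimately show ?thesis
  proof (cases "j \<le> length g1")
    case False
    then obtain k where "j = length g1 + Suc k" by (metis add_Suc_right less_imp_Suc_add not_le)
    then show ?thesis using \<open>t = _\<close> by simp
  qed simp
qed

lemma SetC_part_start: "g1 \<noteq> [] \<Longrightarrow> sum_list g1 \<in> SetC (g1 @ m # g2)"
  unfolding SetC_def by (auto intro!: exI[of _ "length g1"] simp: Suc_le_eq)

lemma SetC_part_end: "g2 \<noteq> [] \<Longrightarrow> sum_list g1 + m \<in> SetC (g1 @ m # g2)"
  unfolding SetC_def by (auto intro!: exI[of _ "Suc (length g1)"])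

definition block_swap :: "nat \<Rightarrow> nat \<Rightarrow> nat \<Rightarrow> nat \<Rightarrow> nat" where
  "block_swap p a b i =
     (if p < i \<and> i \<le> p + a then i + b else if p + a < i \<and> i \<le> p + a + b then i - a else i)"

lemma block_swap_inverse [simp]: "block_swap p b a (block_swap p a b i) = i"
  unfolding block_swap_def by auto

lemma block_swap_in_Sym:
  assumes "p + a + b \<le> n"
  shows "block_swap p a b \<in> Sym n"
  unfolding Sym_def permutes_def
proof (intro CollectI conjI allI impI)
  fix i :: nat
  assume "i \<notin> {1..n}"
  then show "block_swap p a b i = i" using assms unfolding block_swap_def by auto
next
  fix j
  show "\<exists>!i. block_swap p a b i = j"
    by (rule ex1I[of _ "block_swap p b a j"]) (metis block_swap_inverse)+
qed

lemma block_swap_respects_parts: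
  assumes "sum_list (g1 @ a # b # g2) = n" "1 \<le> i" "i < n" "i \<notin> SetC (g1 @ a # b # g2)"
  shows "block_swap (sum_list g1) a b (i + 1) = block_swap (sum_list g1) a b i + 1"
    and "block_swap (sum_list g1) a b i \<notin> SetC (g1 @ b # a # g2)"
proof -
  let ?p = "sum_list g1" and ?s = "block_swap (sum_list g1) a b"
  let ?C = "SetC (g1 @ (a + b) # g2)"
  have i_notin: "i \<notin> ?C" "i \<noteq> ?p + a"
    using assms(4) by (simp_all add: SetC_merge_parts)
  have "i \<noteq> ?p"
    using assms(2) SetC_part_start[of g1 "a + b" g2] i_notin by (cases "g1 = []") auto
  moreover have "i \<noteq> ?p + a + b"
    using assms(1,3) SetC_part_end[of g2 g1 "a + b"] i_notin by (cases "g2 = []") (auto simp: add.assoc)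
  ultimately have "?s (i + 1) = ?s i + 1" and "?s i \<noteq> ?p + b"
    using i_notin unfolding block_swap_def by auto
  then show "?s (i + 1) = ?s i + 1" by blast
  have "?s i \<notin> ?C"
  proof
    assume "?s i \<in> ?C"
    then have "?s i \<le> ?p \<or> ?p + (a + b) \<le> ?s i" by (rule SetC_part_gap)
    then have "?s i = i"
      using \<open>i \<noteq> ?p + a + b\<close> i_notin unfolding block_swap_def by (auto split: if_splits)
    with \<open>?s i \<in> ?C\<close> i_notin show False by simp
  qed
  then show "?s i \<notin> SetC (g1 @ b # a # g2)"
    using \<open>?s i \<noteq> ?p + b\<close> by (simp add: SetC_merge_parts add.commute)
qed

lemma transports_descents_adjacent_swap:
  assumes "sum_list (g1 @ a # b # g2) = n"
  shows "transports_descents n (block_swap (sum_list g1) b a)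
           (SetC (g1 @ a # b # g2)) (SetC (g1 @ b # a # g2))"
proof -
  let ?s = "block_swap (sum_list g1) b a" and ?t = "block_swap (sum_list g1) a b"
  have swapped: "sum_list (g1 @ b # a # g2) = n" using assms by simp
  have s_Sym: "?s \<in> Sym n" and t_Sym: "?t \<in> Sym n"
    using assms by (auto intro!: block_swap_in_Sym)
  have "Des n w \<subseteq> SetC (g1 @ a # b # g2) \<longleftrightarrow> Des n (w \<circ> ?s) \<subseteq> SetC (g1 @ b # a # g2)" for w
  proof
    assume "Des n w \<subseteq> SetC (g1 @ a # b # g2)"
    then show "Des n (w \<circ> ?s) \<subseteq> SetC (g1 @ b # a # g2)"
      using Des_comp_subset[OF s_Sym] block_swap_respects_parts[OF swapped] by blast
  next
    assume "Des n (w \<circ> ?s) \<subseteq> SetC (g1 @ b # a # g2)"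
    then have "Des n (w \<circ> ?s \<circ> ?t) \<subseteq> SetC (g1 @ a # b # g2)"
      using Des_comp_subset[OF t_Sym] block_swap_respects_parts[OF assms] by blast
    moreover have "w \<circ> ?s \<circ> ?t = w" by (simp add: fun_eq_iff)
    ultimately show "Des n w \<subseteq> SetC (g1 @ a # b # g2)" by simp
  qed
  with s_Sym show ?thesis unfolding transports_descents_def by blast
qed

lemma relates_by_adjacent_swaps:
  assumes "mset xs = mset ys"
    and R_refl: "\<And>zs. R zs zs"
    and R_trans: "\<And>xs ys zs. R xs ys \<Longrightarrow> R ys zs \<Longrightarrow> R xs zs"
    and R_swap: "\<And>us a b vs. R (us @ a # b # vs) (us @ b # a # vs)"
  shows "R xs ys"
proof -
  have move: "R (us @ a # vs @ ws) (us @ vs @ a # ws)" for us a vs ws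
  proof (induction vs arbitrary: us)
    case (Cons b vs)
    have "R ((us @ [b]) @ a # vs @ ws) ((us @ [b]) @ vs @ a # ws)" by (rule Cons.IH)
    then show ?case using R_swap[of us a b "vs @ ws"] R_trans by auto
  qed (simp add: R_refl)
  have "R (us @ xs) (us @ ys)" if "mset xs = mset ys" for us
    using that
  proof (induction xs arbitrary: us ys)
    case (Cons a xs)
    then obtain vs ws where ys: "ys = vs @ a # ws"
      by (metis list.set_intros(1) set_mset_mset split_list)
    with Cons.prems have "mset xs = mset (vs @ ws)" by simp
    then have "R ((us @ [a]) @ xs) ((us @ [a]) @ vs @ ws)" by (rule Cons.IH)
    with move[of us a vs ws] show ?case using R_trans ys by auto
  qed (simp add: R_refl)
  from this[of "[]"] assms(1) show ?thesis by simp
qed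

lemma transports_descents_mset_eq:
  assumes "mset \<alpha> = mset \<beta>" "sum_list \<alpha> = n"
  shows "\<exists>s. transports_descents n s (SetC \<alpha>) (SetC \<beta>)"
proof -
  \<comment> \<open>The sum is carried along to make the relation transitive.\<close>
  let ?R = "\<lambda>xs ys. sum_list xs = n \<longrightarrow>
              sum_list ys = n \<and> (\<exists>s. transports_descents n s (SetC xs) (SetC ys))"
  have "?R \<alpha> \<beta>"
  proof (rule relates_by_adjacent_swaps[of \<alpha> \<beta> ?R])
    show "?R zs zs" for zs using transports_descents_id by blast
    show "?R xs zs" if "?R xs ys" "?R ys zs" for xs ys zs
      using that transports_descents_trans by blast
    show "?R (us @ a # b # vs) (us @ b # a # vs)" for us a b vs
      using transports_descents_adjacent_swap[of us a b vs n] by auto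
  qed (rule assms(1))
  with assms(2) show ?thesis by blast
qed

theorem lemma2p4:
  fixes n :: nat and \<alpha> \<beta> :: "nat list"
  assumes "\<alpha> \<in> Comp n" and "\<beta> \<in> Comp n"
    and "underlying_partition \<alpha> = underlying_partition \<beta>"
  shows "(R_ideal n \<alpha> :: ((nat \<Rightarrow> nat) \<Rightarrow> 'k::comm_ring_1) set) = R_ideal n \<beta>"
proof -
  have "mset \<alpha> = mset \<beta>"
    using assms(3) unfolding underlying_partition_def by (metis mset_sort rev_rev_ident)
  moreover have "sum_list \<alpha> = n" using assms(1) unfolding Comp_def by blast
  ultimately obtain s where s: "transports_descents n s (SetC \<alpha>) (SetC \<beta>)"
    using transports_descents_mset_eq by blast
  then have "s \<in> Sym n" unfolding transports_descents_def by blast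
  have "B_comp n \<alpha> = (\<lambda>u. B_comp n \<beta> (u \<circ> s) :: 'k)"
    unfolding B_comp_def by (rule BI_transports_descents[OF s])
  then have "R_ideal n \<alpha> = principal_right_ideal n (\<lambda>u. B_comp n \<beta> (u \<circ> s) :: 'k)"
    by (simp only: R_ideal_eq_principal_right_ideal)
  also have "\<dots> = R_ideal n \<beta>"
    unfolding R_ideal_eq_principal_right_ideal
    by (rule principal_right_ideal_right_translate[OF \<open>s \<in> Sym n\<close>])
  finally show ?thesis .
qed

end
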